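(* There exists a constant $C>0$ such that for all $\beta\in\mathbb R$ and all $N\in\mathbb N$, $$\sup_{x\in\Lambda_N}\int_0^\infty\mathsf P^N\big(X^{N,x}_t\in\Lambda_N\big)\,dt\le C\max\{1,N^{\beta-1}\}.$$
   Context: Fix $\alpha,\alpha_L,\alpha_R>0$. Let $\Lambda_N=\{1,\dots,N-1\}$, $\widehat\Lambda_N=\{0,\dots,N\}$. For $\beta\in\mathbb R$, $\{X^{N,x}_t:t\ge0\}$ (law $\mathsf P^N$) is the continuous-time random walk on $\widehat\Lambda_N$ started at $x$ with generator $A^Nf(x)=\mathbf 1_{\{x\in\Lambda_N\}}N^2\sum_{y\in\Lambda_N,|y-x|=1}\alpha(f(y)-f(x))+\mathbf 1_{\{x=1\}}N^{2-\beta}\alpha_L(f(0)-f(1))+\mathbf 1_{\{x=N-1\}}N^{2-\beta}\alpha_R(f(N)-f(N-1))$, i.e. it jumps between nearest neighbours of $\Lambda_N$ at rate $N^2\alpha$, jumps from $1$ to $0$ at rate $N^{2-\beta}\alpha_L$ and from $N-1$ to $N$ at rate $N^{2-\beta}\alpha_R$, and is absorbed at $0$ and $N$. The constant $C$ may depend on $\alpha,\alpha_L,\alpha_R$ but not on $\beta$, $N$, $x$. *)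

theory Defs
  imports "HOL-Analysis.Analysis"
begin

definition Lam :: "nat \<Rightarrow> nat set" where
  "Lam N = {1..<N}"

definition Lamhat :: "nat \<Rightarrow> nat set" where
  "Lamhat N = {0..N}"

definition rate :: "real \<Rightarrow> real \<Rightarrow> real \<Rightarrow> real \<Rightarrow> nat \<Rightarrow> nat \<Rightarrow> nat \<Rightarrow> real" where
  "rate \<alpha> \<alpha>L \<alpha>R \<beta> N x y =
     (if x \<in> Lam N \<and> y \<in> Lam N \<and> (y = x + 1 \<or> x = y + 1) then real N ^ 2 * \<alpha> else 0)
   + (if x = 1 \<and> y = 0 then real N powr (2 - \<beta>) * \<alpha>L else 0)
   + (if x = N - 1 \<and> y = N \<and> N \<ge> 1 then real N powr (2 - \<beta>) * \<alpha>R else 0)"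

definition Qgen :: "real \<Rightarrow> real \<Rightarrow> real \<Rightarrow> real \<Rightarrow> nat \<Rightarrow> nat \<Rightarrow> nat \<Rightarrow> real" where
  "Qgen \<alpha> \<alpha>L \<alpha>R \<beta> N x y =
     (if x = y then - (\<Sum>z\<in>Lamhat N - {x}. rate \<alpha> \<alpha>L \<alpha>R \<beta> N x z)
      else rate \<alpha> \<alpha>L \<alpha>R \<beta> N x y)"

fun Qpow :: "real \<Rightarrow> real \<Rightarrow> real \<Rightarrow> real \<Rightarrow> nat \<Rightarrow> nat \<Rightarrow> nat \<Rightarrow> nat \<Rightarrow> real" where
  "Qpow \<alpha> \<alpha>L \<alpha>R \<beta> N 0 x y = (if x = y then 1 else 0)"
| "Qpow \<alpha> \<alpha>L \<alpha>R \<beta> N (Suc k) x y =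
     (\<Sum>z\<in>Lamhat N. Qgen \<alpha> \<alpha>L \<alpha>R \<beta> N x z * Qpow \<alpha> \<alpha>L \<alpha>R \<beta> N k z y)"

text \<open>Transition probabilities P^N(X^{N,x}_t = y) = (exp (t A^N)) x y.\<close>
definition trans_prob :: "real \<Rightarrow> real \<Rightarrow> real \<Rightarrow> real \<Rightarrow> nat \<Rightarrow> real \<Rightarrow> nat \<Rightarrow> nat \<Rightarrow> real" where
  "trans_prob \<alpha> \<alpha>L \<alpha>R \<beta> N t x y =
     (\<Sum>k. t ^ k / fact k * Qpow \<alpha> \<alpha>L \<alpha>R \<beta> N k x y)"

definition surv_prob :: "real \<Rightarrow> real \<Rightarrow> real \<Rightarrow> real \<Rightarrow> nat \<Rightarrow> nat \<Rightarrow> real \<Rightarrow> real" where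
  "surv_prob \<alpha> \<alpha>L \<alpha>R \<beta> N x t = (\<Sum>y\<in>Lam N. trans_prob \<alpha> \<alpha>L \<alpha>R \<beta> N t x y)"

end

theory Submission
  imports Defs "HOL-Probability.Distributions"
begin

(* Uniformisation: if c exceeds every exit rate, B = Q + c I is nonnegative and
   exp (t Q) = exp (- c t) exp (t B), so integrating the Erlang densities gives
   \<integral>_0^\<infinity> P(X_t \<in> \<Lambda>) dt = \<Sum>_j (B^j 1_\<Lambda>)(x) / c^(j+1).
   A Lyapunov function h \<ge> 0 with Q h \<le> -1_\<Lambda>, i.e. B h \<le> c h - 1_\<Lambda>, makes these
   partial sums telescope to at most h x.  For the walk,
   h x = x (N - x) / (2 N^2 \<alpha>) + (N - 1) / 2 * N^(\<beta>-2) (1/\<alpha>L + 1/\<alpha>R) on \<Lambda>_N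
   (and 0 at the absorbing sites) works, and it is at most
   (1/\<alpha> + 1/\<alpha>L + 1/\<alpha>R) max 1 (N^(\<beta>-1)). *)

fun mat_pow :: "'a set \<Rightarrow> ('a \<Rightarrow> 'a \<Rightarrow> real) \<Rightarrow> nat \<Rightarrow> 'a \<Rightarrow> 'a \<Rightarrow> real" where
  "mat_pow S A 0 x y = (if x = y then 1 else 0)"
| "mat_pow S A (Suc k) x y = (\<Sum>z\<in>S. A x z * mat_pow S A k z y)"

definition mat_exp :: "'a set \<Rightarrow> ('a \<Rightarrow> 'a \<Rightarrow> real) \<Rightarrow> real \<Rightarrow> 'a \<Rightarrow> 'a \<Rightarrow> real" where
  "mat_exp S A t x y = (\<Sum>k. t ^ k / fact k * mat_pow S A k x y)"

lemma mat_pow_Suc_right: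
  assumes "finite S" "x \<in> S" "y \<in> S"
  shows "mat_pow S A (Suc k) x y = (\<Sum>z\<in>S. mat_pow S A k x z * A z y)"
  using assms(2)
proof (induction k arbitrary: x)
  case 0
  have "(\<Sum>z\<in>S. A x z * (if z = y then 1 else 0)) = (\<Sum>z\<in>S. if z = y then A x z else 0)"
    "(\<Sum>z\<in>S. (if x = z then 1 else 0) * A z y) = (\<Sum>z\<in>S. if x = z then A z y else 0)"
    by (auto intro: sum.cong)
  then show ?case
    using 0 assms(1,3) by simp
next
  case (Suc k)
  have "mat_pow S A (Suc (Suc k)) x y = (\<Sum>z\<in>S. A x z * (\<Sum>w\<in>S. mat_pow S A k z w * A w y))"
    using Suc.IH by (simp only: mat_pow.simps(2)) (rule sum.cong, simp_all)
  also have "\<dots> = (\<Sum>w\<in>S. (\<Sum>z\<in>S. A x z * mat_pow S A k z w) * A w y)"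
    unfolding sum_distrib_left sum_distrib_right mult.assoc by (rule sum.swap)
  finally show ?case by (simp only: mat_pow.simps(2))
qed

lemma mat_pow_nonneg:
  assumes "\<forall>u\<in>S. \<forall>v\<in>S. A u v \<ge> 0" "x \<in> S"
  shows "mat_pow S A k x y \<ge> 0"
  using assms(2) by (induction k arbitrary: x) (auto intro!: sum_nonneg simp: assms(1))

lemma abs_mat_pow_le:
  assumes "finite S" "x \<in> S"
  shows "\<bar>mat_pow S A k x y\<bar> \<le> (\<Sum>u\<in>S. \<Sum>v\<in>S. \<bar>A u v\<bar>) ^ k"
  using assms(2)
proof (induction k arbitrary: x)
  case 0
  then show ?case by simp
next
  case (Suc k)
  define M where "M = (\<Sum>u\<in>S. \<Sum>v\<in>S. \<bar>A u v\<bar>)"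
  have "\<bar>mat_pow S A (Suc k) x y\<bar> \<le> (\<Sum>z\<in>S. \<bar>A x z\<bar> * M ^ k)"
    unfolding mat_pow.simps M_def
    by (rule order_trans[OF sum_abs]) (auto intro!: sum_mono mult_left_mono simp: abs_mult Suc.IH)
  also have "\<dots> \<le> M * M ^ k"
    unfolding sum_distrib_right[symmetric] M_def
    using member_le_sum[of x S "\<lambda>u. \<Sum>v\<in>S. \<bar>A u v\<bar>"] Suc.prems assms(1)
    by (intro mult_right_mono) (auto intro!: sum_nonneg zero_le_power)
  finally show ?case by (simp add: M_def)
qed

lemma summable_norm_mat_exp_series:
  assumes "finite S" "x \<in> S"
  shows "summable (\<lambda>k. norm (t ^ k / fact k * mat_pow S A k x y))"
proof (rule summable_comparison_test')
  define M where "M = (\<Sum>u\<in>S. \<Sum>v\<in>S. \<bar>A u v\<bar>)"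
  show "summable (\<lambda>k. inverse (fact k) * (\<bar>t\<bar> * M) ^ k)"
    by (rule summable_exp)
  show "norm (norm (t ^ k / fact k * mat_pow S A k x y)) \<le> inverse (fact k) * (\<bar>t\<bar> * M) ^ k" for k
  proof -
    have "inverse (fact k) * \<bar>t\<bar> ^ k * \<bar>mat_pow S A k x y\<bar> \<le> inverse (fact k) * \<bar>t\<bar> ^ k * M ^ k"
      unfolding M_def by (intro mult_left_mono abs_mat_pow_le[OF assms]) auto
    then show ?thesis
      by (simp add: abs_mult power_abs power_mult_distrib divide_inverse mult_ac)
  qed
qed

lemma sum_choose_Suc_shift:
  fixes F :: "nat \<Rightarrow> 'a::comm_ring_1"
  shows "(\<Sum>i\<le>k. of_nat (k choose i) * c ^ (k - i) * (F (Suc i) + c * F i))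
       = (\<Sum>i\<le>Suc k. of_nat (Suc k choose i) * c ^ (Suc k - i) * F i)"
proof -
  have "(\<Sum>i\<le>Suc k. of_nat (Suc k choose i) * c ^ (Suc k - i) * F i)
      = c ^ Suc k * F 0 + (\<Sum>i\<le>k. of_nat (k choose Suc i) * c ^ (k - i) * F (Suc i))
        + (\<Sum>i\<le>k. of_nat (k choose i) * c ^ (k - i) * F (Suc i))"
    by (subst sum.atMost_Suc_shift) (simp add: sum.distrib algebra_simps)
  also have "c ^ Suc k * F 0 + (\<Sum>i\<le>k. of_nat (k choose Suc i) * c ^ (k - i) * F (Suc i))
      = (\<Sum>i\<le>Suc k. of_nat (k choose i) * c ^ (Suc k - i) * F i)"
    by (subst sum.atMost_Suc_shift) (simp add: Suc_diff_le binomial_eq_0)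
  also have "\<dots> = (\<Sum>i\<le>k. of_nat (k choose i) * c ^ (k - i) * (c * F i))"
    by (simp add: Suc_diff_le binomial_eq_0 algebra_simps)
  finally show ?thesis
    by (simp add: sum.distrib algebra_simps)
qed

lemma mat_pow_diff_scalar:
  assumes "finite S" "x \<in> S"
  shows "mat_pow S (\<lambda>u v. B u v - (if u = v then c else 0)) k x y
       = (\<Sum>i\<le>k. of_nat (k choose i) * (- c) ^ (k - i) * mat_pow S B i x y)"
  using assms(2)
proof (induction k arbitrary: x)
  case 0
  then show ?case by simp
next
  case (Suc k)
  have B_step: "(\<Sum>z\<in>S. (B x z - (if x = z then c else 0)) * mat_pow S B i z y)
      = mat_pow S B (Suc i) x y + (- c) * mat_pow S B i x y" for i
    using Suc.prems assms(1) by (simp add: left_diff_distrib sum_subtractf if_distrib[of "\<lambda>u. u * _"] cong: if_cong)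
  have "mat_pow S (\<lambda>u v. B u v - (if u = v then c else 0)) (Suc k) x y
      = (\<Sum>z\<in>S. (B x z - (if x = z then c else 0))
           * (\<Sum>i\<le>k. of_nat (k choose i) * (- c) ^ (k - i) * mat_pow S B i z y))"
    using Suc.IH by (simp only: mat_pow.simps(2)) (rule sum.cong, simp_all)
  also have "\<dots> = (\<Sum>i\<le>k. of_nat (k choose i) * (- c) ^ (k - i)
           * (\<Sum>z\<in>S. (B x z - (if x = z then c else 0)) * mat_pow S B i z y))"
    unfolding sum_distrib_left sum_distrib_right by (subst sum.swap) (simp add: mult_ac)
  also have "\<dots> = (\<Sum>i\<le>Suc k. of_nat (Suc k choose i) * (- c) ^ (Suc k - i) * mat_pow S B i x y)"
    unfolding B_step by (rule sum_choose_Suc_shift)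
  finally show ?case .
qed

lemma mat_exp_diff_scalar:
  assumes "finite S" "x \<in> S"
  shows "mat_exp S (\<lambda>u v. B u v - (if u = v then c else 0)) t x y = exp (- c * t) * mat_exp S B t x y"
proof -
  define a where "a j = t ^ j / fact j * mat_pow S B j x y" for j
  define b where "b j = (- c * t) ^ j /\<^sub>R fact j" for j
  have "summable (\<lambda>j. norm (a j))"
    unfolding a_def by (rule summable_norm_mat_exp_series[OF assms])
  moreover have "summable (\<lambda>j. norm (b j))"
    unfolding b_def by (rule summable_norm_exp)
  ultimately have "(\<Sum>j. a j) * (\<Sum>j. b j) = (\<Sum>k. \<Sum>i\<le>k. a i * b (k - i))"
    by (rule Cauchy_product)
  moreover have "(\<Sum>j. b j) = exp (- c * t)"
    unfolding b_def by (rule exp_converges[THEN sums_unique, symmetric])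
  moreover have "(\<Sum>i\<le>k. a i * b (k - i))
      = t ^ k / fact k * mat_pow S (\<lambda>u v. B u v - (if u = v then c else 0)) k x y" for k
  proof -
    have "a i * b (k - i) = t ^ k / fact k * (of_nat (k choose i) * (- c) ^ (k - i) * mat_pow S B i x y)"
      if "i \<le> k" for i
    proof -
      have tk: "t ^ k = t ^ i * t ^ (k - i)"
        using that by (simp flip: power_add)
      have ck: "real (k choose i) = fact k / (fact i * fact (k - i))"
        using that by (simp add: binomial_fact)
      have bk: "b (k - i) = (- c) ^ (k - i) * t ^ (k - i) / fact (k - i)"
        unfolding b_def by (simp add: power_mult_distrib[symmetric] divide_inverse)
      show ?thesis
        unfolding a_def bk tk ck by (simp add: field_simps)
    qed
    then show ?thesis
      by (simp add: mat_pow_diff_scalar[OF assms] sum_distrib_left)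
  qed
  ultimately show ?thesis
    unfolding mat_exp_def a_def by (simp add: mult.commute)
qed

lemma sum_mat_exp_diff_scalar_mult:
  assumes "finite S" "x \<in> S"
  shows "(\<Sum>y\<in>S. mat_exp S (\<lambda>u v. B u v - (if u = v then c else 0)) t x y * g y)
       = exp (- c * t) * (\<Sum>j. t ^ j / fact j * (\<Sum>y\<in>S. mat_pow S B j x y * g y))"
    and "summable (\<lambda>j. t ^ j / fact j * (\<Sum>y\<in>S. mat_pow S B j x y * g y))"
proof -
  have summable_series: "summable (\<lambda>j. t ^ j / fact j * mat_pow S B j x y)" for y
    by (rule summable_norm_cancel[OF summable_norm_mat_exp_series[OF assms]])
  have "(\<Sum>y\<in>S. mat_exp S (\<lambda>u v. B u v - (if u = v then c else 0)) t x y * g y)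
      = exp (- c * t) * (\<Sum>y\<in>S. mat_exp S B t x y * g y)"
    by (simp add: mat_exp_diff_scalar[OF assms] sum_distrib_left mult.assoc)
  also have "\<dots> = exp (- c * t) * (\<Sum>y\<in>S. \<Sum>j. t ^ j / fact j * mat_pow S B j x y * g y)"
    unfolding mat_exp_def by (simp only: suminf_mult2[OF summable_series])
  also have "(\<Sum>y\<in>S. \<Sum>j. t ^ j / fact j * mat_pow S B j x y * g y)
      = (\<Sum>j. \<Sum>y\<in>S. t ^ j / fact j * mat_pow S B j x y * g y)"
    using summable_mult2[OF summable_series] by (rule suminf_sum[symmetric])
  finally show "(\<Sum>y\<in>S. mat_exp S (\<lambda>u v. B u v - (if u = v then c else 0)) t x y * g y)
      = exp (- c * t) * (\<Sum>j. t ^ j / fact j * (\<Sum>y\<in>S. mat_pow S B j x y * g y))"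
    by (simp add: sum_distrib_left mult.assoc)
  have "summable (\<lambda>j. \<Sum>y\<in>S. t ^ j / fact j * mat_pow S B j x y * g y)"
    using summable_mult2[OF summable_series] by (rule summable_sum)
  then show "summable (\<lambda>j. t ^ j / fact j * (\<Sum>y\<in>S. mat_pow S B j x y * g y))"
    by (simp add: sum_distrib_left mult.assoc)
qed

lemma sum_mat_pow_div_le_lyapunov:
  assumes "finite S" "c > 0" "x \<in> S"
    and B_nonneg: "\<forall>u\<in>S. \<forall>v\<in>S. B u v \<ge> 0"
    and h_nonneg: "\<forall>z\<in>S. h z \<ge> 0"
    and drift: "\<forall>z\<in>S. (\<Sum>y\<in>S. B z y * h y) \<le> c * h z - g z"
  shows "(\<Sum>j<n. (\<Sum>y\<in>S. mat_pow S B j x y * g y) / c ^ Suc j) \<le> h x"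
proof -
  define u where "u j = (\<Sum>y\<in>S. mat_pow S B j x y * h y)" for j
  have step: "(\<Sum>y\<in>S. mat_pow S B j x y * g y) \<le> c * u j - u (Suc j)" for j
  proof -
    have "u (Suc j) = (\<Sum>y\<in>S. (\<Sum>z\<in>S. mat_pow S B j x z * B z y) * h y)"
      unfolding u_def using mat_pow_Suc_right[OF assms(1,3)]
      by (intro sum.cong refl) (simp del: mat_pow.simps)
    also have "\<dots> = (\<Sum>z\<in>S. mat_pow S B j x z * (\<Sum>y\<in>S. B z y * h y))"
      unfolding sum_distrib_left sum_distrib_right mult.assoc by (rule sum.swap)
    also have "\<dots> \<le> (\<Sum>z\<in>S. mat_pow S B j x z * (c * h z - g z))"
      using drift by (intro sum_mono mult_left_mono mat_pow_nonneg[OF B_nonneg assms(3)]) auto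
    also have "\<dots> = c * u j - (\<Sum>y\<in>S. mat_pow S B j x y * g y)"
      unfolding u_def by (simp add: algebra_simps sum_subtractf sum_distrib_left)
    finally show ?thesis by simp
  qed
  have "(\<Sum>j<n. (\<Sum>y\<in>S. mat_pow S B j x y * g y) / c ^ Suc j)
      \<le> (\<Sum>j<n. u j / c ^ j - u (Suc j) / c ^ Suc j)"
  proof (rule sum_mono)
    fix j
    have "(\<Sum>y\<in>S. mat_pow S B j x y * g y) / c ^ Suc j \<le> (c * u j - u (Suc j)) / c ^ Suc j"
      using step assms(2) by (intro divide_right_mono) auto
    also have "\<dots> = u j / c ^ j - u (Suc j) / c ^ Suc j"
      using assms(2) by (simp add: field_simps)
    finally show "(\<Sum>y\<in>S. mat_pow S B j x y * g y) / c ^ Suc j \<le> u j / c ^ j - u (Suc j) / c ^ Suc j" .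
  qed
  also have "\<dots> = u 0 - u n / c ^ n"
    by (subst sum_lessThan_telescope') simp
  also have "\<dots> \<le> u 0"
    using assms(2) h_nonneg unfolding u_def
    by (auto intro!: divide_nonneg_pos sum_nonneg mult_nonneg_nonneg mat_pow_nonneg[OF B_nonneg assms(3)])
  also have "u 0 = h x"
    unfolding u_def using assms(1,3) by (simp add: if_distrib[of "\<lambda>v. v * _"] cong: if_cong)
  finally show ?thesis .
qed

lemma nn_integral_exp_power_series:
  fixes c :: real and a :: "nat \<Rightarrow> real"
  assumes "c > 0" and a_nonneg: "\<forall>j. a j \<ge> 0"
    and summable: "\<forall>t\<ge>0. summable (\<lambda>j. t ^ j / fact j * a j)"
  shows "(\<integral>\<^sup>+t. ennreal (indicator {0..} t * (exp (- c * t) * (\<Sum>j. t ^ j / fact j * a j))) \<partial>lborel)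
       = (\<Sum>j. ennreal (a j / c ^ Suc j))"
proof -
  define f where "f j t = erlang_density j c t * (a j / c ^ Suc j)" for j t
  have f_nonneg: "f j t \<ge> 0" for j t
    unfolding f_def using assms(1) a_nonneg by (auto simp: erlang_density_def)
  have "(\<lambda>j. f j t) sums (indicator {0..} t * (exp (- c * t) * (\<Sum>j. t ^ j / fact j * a j)))" for t
  proof (cases "t \<ge> 0")
    case True
    have f_eq: "(\<lambda>j. f j t) = (\<lambda>j. exp (- c * t) * (t ^ j / fact j * a j))"
      unfolding f_def erlang_density_def using True assms(1) by (simp add: field_simps)
    have ind: "indicator {0..} t = (1::real)"
      using True by simp
    show ?thesis
      unfolding f_eq ind mult_1_left using True summable by (intro sums_mult summable_sums) simp
  next
    case False
    then show ?thesis by (simp add: f_def erlang_density_def)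
  qed
  then have "(\<integral>\<^sup>+t. ennreal (indicator {0..} t * (exp (- c * t) * (\<Sum>j. t ^ j / fact j * a j))) \<partial>lborel)
      = (\<integral>\<^sup>+t. (\<Sum>j. ennreal (f j t)) \<partial>lborel)"
    by (intro nn_integral_cong) (rule suminf_ennreal_eq[symmetric, OF f_nonneg])
  also have "\<dots> = (\<Sum>j. \<integral>\<^sup>+t. ennreal (f j t) \<partial>lborel)"
    unfolding f_def by (rule nn_integral_suminf) measurable
  also have "\<dots> = (\<Sum>j. ennreal (a j / c ^ Suc j))"
  proof (intro suminf_cong)
    fix j
    have "(\<integral>\<^sup>+t. ennreal (f j t) \<partial>lborel)
        = (\<integral>\<^sup>+t. ennreal (erlang_density j c t) * ennreal (a j / c ^ Suc j) \<partial>lborel)"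
      unfolding f_def using assms(1) a_nonneg
      by (intro nn_integral_cong ennreal_mult) auto
    also have "\<dots> = (\<integral>\<^sup>+t. ennreal (erlang_density j c t) \<partial>lborel) * ennreal (a j / c ^ Suc j)"
      by (rule nn_integral_multc) simp
    also have "(\<integral>\<^sup>+t. ennreal (erlang_density j c t) \<partial>lborel) = 1"
      using nn_integral_erlang_ith_moment[OF assms(1), of j 0] by simp
    finally show "(\<integral>\<^sup>+t. ennreal (f j t) \<partial>lborel) = ennreal (a j / c ^ Suc j)"
      by simp
  qed
  finally show ?thesis .
qed

lemma nn_integral_mat_exp_le_lyapunov:
  assumes "finite S" "c > 0" "x \<in> S"
    and shift_nonneg: "\<forall>u\<in>S. \<forall>v\<in>S. Q u v + (if u = v then c else 0) \<ge> 0"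
    and h_nonneg: "\<forall>z\<in>S. h z \<ge> 0"
    and g_nonneg: "\<forall>z\<in>S. g z \<ge> 0"
    and drift: "\<forall>z\<in>S. (\<Sum>y\<in>S. Q z y * h y) \<le> - g z"
  shows "(\<integral>\<^sup>+t. ennreal (indicator {0..} t * (\<Sum>y\<in>S. mat_exp S Q t x y * g y)) \<partial>lborel)
       \<le> ennreal (h x)"
proof -
  define B where "B u v = Q u v + (if u = v then c else 0)" for u v
  define a where "a j = (\<Sum>y\<in>S. mat_pow S B j x y * g y)" for j
  have Q_eq: "Q = (\<lambda>u v. B u v - (if u = v then c else 0))"
    by (simp add: B_def)
  have B_nonneg: "\<forall>u\<in>S. \<forall>v\<in>S. B u v \<ge> 0"
    using shift_nonneg by (simp add: B_def)
  have a_nonneg: "\<forall>j. a j \<ge> 0"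
    unfolding a_def using g_nonneg
    by (auto intro!: sum_nonneg mult_nonneg_nonneg mat_pow_nonneg[OF B_nonneg assms(3)])
  have B_drift: "\<forall>z\<in>S. (\<Sum>y\<in>S. B z y * h y) \<le> c * h z - g z"
    using drift assms(1) by (simp add: B_def distrib_right sum.distrib if_distrib[of "\<lambda>v. v * _"] cong: if_cong)
  have partial_sums: "(\<Sum>j<n. a j / c ^ Suc j) \<le> h x" for n
    unfolding a_def by (rule sum_mat_pow_div_le_lyapunov[OF assms(1-3) B_nonneg h_nonneg B_drift])
  have summable_a: "summable (\<lambda>j. a j / c ^ Suc j)"
    using a_nonneg assms(2) partial_sums by (intro summableI_nonneg_bounded) auto
  have series: "(\<Sum>y\<in>S. mat_exp S Q t x y * g y) = exp (- c * t) * (\<Sum>j. t ^ j / fact j * a j)"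
    and summable_t: "summable (\<lambda>j. t ^ j / fact j * a j)" for t
    unfolding Q_eq a_def by (rule sum_mat_exp_diff_scalar_mult[OF assms(1,3)])+
  have "(\<integral>\<^sup>+t. ennreal (indicator {0..} t * (\<Sum>y\<in>S. mat_exp S Q t x y * g y)) \<partial>lborel)
      = (\<Sum>j. ennreal (a j / c ^ Suc j))"
    unfolding series by (rule nn_integral_exp_power_series[OF assms(2) a_nonneg]) (blast intro: summable_t)
  also have "\<dots> = ennreal (\<Sum>j. a j / c ^ Suc j)"
    using a_nonneg assms(2) by (intro suminf_ennreal_eq summable_sums[OF summable_a]) auto
  also have "\<dots> \<le> ennreal (h x)"
    by (intro ennreal_leI suminf_le_const[OF summable_a partial_sums])
  finally show ?thesis .
qed

lemma Qpow_eq_mat_pow: "Qpow \<alpha> \<alpha>L \<alpha>R \<beta> N k = mat_pow (Lamhat N) (Qgen \<alpha> \<alpha>L \<alpha>R \<beta> N) k"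
  by (induction k) (simp_all add: fun_eq_iff)

lemma surv_prob_eq_sum_mat_exp:
  "surv_prob \<alpha> \<alpha>L \<alpha>R \<beta> N x t
     = (\<Sum>y\<in>Lamhat N. mat_exp (Lamhat N) (Qgen \<alpha> \<alpha>L \<alpha>R \<beta> N) t x y * indicator (Lam N) y)"
proof -
  have "{y \<in> Lamhat N. y \<in> Lam N} = Lam N" "Lamhat N \<inter> Lam N = Lam N" "finite (Lamhat N)"
    by (auto simp: Lam_def Lamhat_def)
  then show ?thesis
    by (simp add: surv_prob_def trans_prob_def mat_exp_def Qpow_eq_mat_pow)
qed

lemma rate_nonneg:
  assumes "\<alpha> \<ge> 0" "\<alpha>L \<ge> 0" "\<alpha>R \<ge> 0"
  shows "rate \<alpha> \<alpha>L \<alpha>R \<beta> N x y \<ge> 0"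
  using assms by (simp add: rate_def)

lemma rate_self [simp]: "rate \<alpha> \<alpha>L \<alpha>R \<beta> N x x = 0"
  by (auto simp: rate_def)

lemma rate_outside_Lam:
  assumes "2 \<le> N" "x \<notin> Lam N"
  shows "rate \<alpha> \<alpha>L \<alpha>R \<beta> N x y = 0"
proof -
  have "x \<noteq> 1" "x \<noteq> N - 1"
    using assms by (auto simp: Lam_def)
  then show ?thesis
    using assms(2) by (simp add: rate_def)
qed

lemma rate_inside_Lam:
  assumes "x \<in> Lam N"
  shows "rate \<alpha> \<alpha>L \<alpha>R \<beta> N x y =
      (if y = x + 1 then if x + 1 < N then real N ^ 2 * \<alpha> else 0 else 0)
    + (if y = x - 1 then if 2 \<le> x then real N ^ 2 * \<alpha> else 0 else 0)
    + (if y = 0 then if x = 1 then real N powr (2 - \<beta>) * \<alpha>L else 0 else 0)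
    + (if y = N then if x = N - 1 then real N powr (2 - \<beta>) * \<alpha>R else 0 else 0)"
proof -
  have "1 \<le> x" "x < N"
    using assms by (auto simp: Lam_def)
  then show ?thesis
    unfolding rate_def Lam_def by (auto split: if_splits)
qed

lemma Qgen_shift_nonneg:
  assumes "\<alpha> \<ge> 0" "\<alpha>L \<ge> 0" "\<alpha>R \<ge> 0" "x \<in> Lamhat N"
    and "(\<Sum>u\<in>Lamhat N. \<Sum>v\<in>Lamhat N. rate \<alpha> \<alpha>L \<alpha>R \<beta> N u v) \<le> c"
  shows "Qgen \<alpha> \<alpha>L \<alpha>R \<beta> N x z + (if x = z then c else 0) \<ge> 0"
proof -
  have "(\<Sum>v\<in>Lamhat N - {x}. rate \<alpha> \<alpha>L \<alpha>R \<beta> N x v) \<le> (\<Sum>v\<in>Lamhat N. rate \<alpha> \<alpha>L \<alpha>R \<beta> N x v)"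
    using assms(1-3) by (intro sum_mono2) (auto intro: rate_nonneg simp: Lamhat_def)
  also have "\<dots> \<le> (\<Sum>u\<in>Lamhat N. \<Sum>v\<in>Lamhat N. rate \<alpha> \<alpha>L \<alpha>R \<beta> N u v)"
    using assms(1-4) by (intro member_le_sum) (auto intro!: sum_nonneg rate_nonneg simp: Lamhat_def)
  finally show ?thesis
    using assms rate_nonneg[OF assms(1-3)] by (auto simp: Qgen_def)
qed

lemma sum_Qgen_mult:
  assumes "z \<in> Lamhat N"
  shows "(\<Sum>y\<in>Lamhat N. Qgen \<alpha> \<alpha>L \<alpha>R \<beta> N z y * f y)
       = (\<Sum>y\<in>Lamhat N. rate \<alpha> \<alpha>L \<alpha>R \<beta> N z y * (f y - f z))"
proof -
  let ?r = "rate \<alpha> \<alpha>L \<alpha>R \<beta> N z"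
  have "Qgen \<alpha> \<alpha>L \<alpha>R \<beta> N z y * f y = ?r y * f y - (if y = z then (\<Sum>w\<in>Lamhat N - {z}. ?r w) * f z else 0)" for y
    by (simp add: Qgen_def)
  moreover have "(\<Sum>w\<in>Lamhat N - {z}. ?r w) = (\<Sum>w\<in>Lamhat N. ?r w)"
    using assms by (simp add: sum_diff1 Lamhat_def)
  ultimately show ?thesis
    using assms by (simp add: sum_subtractf right_diff_distrib sum_distrib_right Lamhat_def)
qed

lemma sum_Qgen_mult_inside_Lam:
  assumes "z \<in> Lam N"
  shows "(\<Sum>y\<in>Lamhat N. Qgen \<alpha> \<alpha>L \<alpha>R \<beta> N z y * f y)
       = (if z + 1 < N then real N ^ 2 * \<alpha> * (f (z + 1) - f z) else 0)
       + (if 2 \<le> z then real N ^ 2 * \<alpha> * (f (z - 1) - f z) else 0)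
       + (if z = 1 then real N powr (2 - \<beta>) * \<alpha>L * (f 0 - f z) else 0)
       + (if z = N - 1 then real N powr (2 - \<beta>) * \<alpha>R * (f N - f z) else 0)"
proof -
  have "z \<in> Lamhat N" "z + 1 \<le> N" "z - 1 \<le> N"
    using assms by (auto simp: Lam_def Lamhat_def)
  then show ?thesis
    unfolding sum_Qgen_mult[OF \<open>z \<in> Lamhat N\<close>] rate_inside_Lam[OF assms] distrib_right sum.distrib
    by (simp add: if_distrib[of "\<lambda>u. u * _"] Lamhat_def cong: if_cong)
qed

definition lyap_quad :: "real \<Rightarrow> nat \<Rightarrow> real \<Rightarrow> real" where
  "lyap_quad \<alpha> N u = u * (real N - u) / (2 * (real N ^ 2 * \<alpha>))"

(* Chosen so that a jump from 1 to 0 or from N - 1 to N, at the slow rate N^(2-\<beta>), still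
   lowers lyap by at least (N - 1) / 2, the drop of lyap_quad across that edge. *)
definition lyap_const :: "real \<Rightarrow> real \<Rightarrow> real \<Rightarrow> nat \<Rightarrow> real" where
  "lyap_const \<alpha>L \<alpha>R \<beta> N =
     (real N - 1) / 2 * (1 / (real N powr (2 - \<beta>) * \<alpha>L) + 1 / (real N powr (2 - \<beta>) * \<alpha>R))"

definition lyap :: "real \<Rightarrow> real \<Rightarrow> real \<Rightarrow> real \<Rightarrow> nat \<Rightarrow> nat \<Rightarrow> real" where
  "lyap \<alpha> \<alpha>L \<alpha>R \<beta> N x =
     (if x \<in> Lam N then lyap_quad \<alpha> N (real x) + lyap_const \<alpha>L \<alpha>R \<beta> N else 0)"

lemma lyap_quad_second_difference:
  assumes "\<alpha> > 0" "N > 0"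
  shows "real N ^ 2 * \<alpha> * (lyap_quad \<alpha> N (u + 1) - lyap_quad \<alpha> N u)
       + real N ^ 2 * \<alpha> * (lyap_quad \<alpha> N (u - 1) - lyap_quad \<alpha> N u) = -1"
  using assms by (simp add: lyap_quad_def field_simps)

lemma lyap_const_absorbing:
  assumes "\<alpha>L > 0" "\<alpha>R > 0" "N \<ge> 1"
  shows "(real N - 1) / 2 \<le> real N powr (2 - \<beta>) * \<alpha>L * lyap_const \<alpha>L \<alpha>R \<beta> N"
    and "(real N - 1) / 2 \<le> real N powr (2 - \<beta>) * \<alpha>R * lyap_const \<alpha>L \<alpha>R \<beta> N"
  using assms by (simp_all add: lyap_const_def field_simps)

lemma lyap_nonneg:
  assumes "\<alpha> > 0" "\<alpha>L > 0" "\<alpha>R > 0"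
  shows "lyap \<alpha> \<alpha>L \<alpha>R \<beta> N x \<ge> 0"
  using assms
  by (auto simp: lyap_def lyap_quad_def lyap_const_def Lam_def
      intro!: add_nonneg_nonneg mult_nonneg_nonneg divide_nonneg_pos)

lemma lyap_drift_right:
  assumes "\<alpha> > 0" "\<alpha>L > 0" "\<alpha>R > 0" "z \<in> Lam N"
  shows "(if z + 1 < N then real N ^ 2 * \<alpha> * (lyap \<alpha> \<alpha>L \<alpha>R \<beta> N (z + 1) - lyap \<alpha> \<alpha>L \<alpha>R \<beta> N z) else 0)
       + (if z = N - 1 then real N powr (2 - \<beta>) * \<alpha>R * (lyap \<alpha> \<alpha>L \<alpha>R \<beta> N N - lyap \<alpha> \<alpha>L \<alpha>R \<beta> N z) else 0)
       \<le> real N ^ 2 * \<alpha> * (lyap_quad \<alpha> N (real z + 1) - lyap_quad \<alpha> N (real z))"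
proof (cases "z + 1 < N")
  case True
  then have "z + 1 \<in> Lam N" "z \<noteq> N - 1"
    using assms(4) by (auto simp: Lam_def)
  then show ?thesis
    using True assms(4) by (simp add: lyap_def add.commute)
next
  case False
  define c where "c = real N powr (2 - \<beta>) * \<alpha>R"
  have z: "z = N - 1" "real N = real z + 1" "z \<ge> 1"
    using False assms(4) by (auto simp: Lam_def)
  have lyap_z: "lyap \<alpha> \<alpha>L \<alpha>R \<beta> N z = lyap_quad \<alpha> N (real z) + lyap_const \<alpha>L \<alpha>R \<beta> N"
    and lyap_N: "lyap \<alpha> \<alpha>L \<alpha>R \<beta> N N = 0"
    using assms(4) by (simp_all add: lyap_def Lam_def)
  have "real N ^ 2 * \<alpha> * lyap_quad \<alpha> N (real z) = (real N - 1) / 2"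
    "real N ^ 2 * \<alpha> * lyap_quad \<alpha> N (real z + 1) = 0" "lyap_quad \<alpha> N (real z) \<ge> 0"
    using assms(1) z by (simp_all add: lyap_quad_def)
  moreover have "(real N - 1) / 2 \<le> c * lyap_const \<alpha>L \<alpha>R \<beta> N"
    unfolding c_def using assms(2,3) z by (intro lyap_const_absorbing) auto
  moreover have "c * lyap_quad \<alpha> N (real z) \<ge> 0"
    using assms \<open>lyap_quad \<alpha> N (real z) \<ge> 0\<close> by (simp add: c_def)
  ultimately have "c * (lyap \<alpha> \<alpha>L \<alpha>R \<beta> N N - lyap \<alpha> \<alpha>L \<alpha>R \<beta> N z)
      \<le> real N ^ 2 * \<alpha> * (lyap_quad \<alpha> N (real z + 1) - lyap_quad \<alpha> N (real z))"
    unfolding lyap_z lyap_N right_diff_distrib distrib_left mult_zero_right by linarith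
  then show ?thesis
    using False z(1) by (simp add: c_def)
qed

lemma lyap_drift_left:
  assumes "\<alpha> > 0" "\<alpha>L > 0" "\<alpha>R > 0" "z \<in> Lam N"
  shows "(if 2 \<le> z then real N ^ 2 * \<alpha> * (lyap \<alpha> \<alpha>L \<alpha>R \<beta> N (z - 1) - lyap \<alpha> \<alpha>L \<alpha>R \<beta> N z) else 0)
       + (if z = 1 then real N powr (2 - \<beta>) * \<alpha>L * (lyap \<alpha> \<alpha>L \<alpha>R \<beta> N 0 - lyap \<alpha> \<alpha>L \<alpha>R \<beta> N z) else 0)
       \<le> real N ^ 2 * \<alpha> * (lyap_quad \<alpha> N (real z - 1) - lyap_quad \<alpha> N (real z))"
proof (cases "2 \<le> z")
  case True
  then have "z - 1 \<in> Lam N" "z \<noteq> 1"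
    using assms(4) by (auto simp: Lam_def)
  then show ?thesis
    using True assms(4) by (simp add: lyap_def of_nat_diff)
next
  case False
  define b where "b = real N powr (2 - \<beta>) * \<alpha>L"
  have z: "z = 1" "N \<ge> 2"
    using False assms(4) by (auto simp: Lam_def)
  have lyap_z: "lyap \<alpha> \<alpha>L \<alpha>R \<beta> N z = lyap_quad \<alpha> N (real z) + lyap_const \<alpha>L \<alpha>R \<beta> N"
    and lyap_0: "lyap \<alpha> \<alpha>L \<alpha>R \<beta> N 0 = 0"
    using assms(4) by (simp_all add: lyap_def Lam_def)
  have "real N ^ 2 * \<alpha> * lyap_quad \<alpha> N (real z) = (real N - 1) / 2"
    "real N ^ 2 * \<alpha> * lyap_quad \<alpha> N (real z - 1) = 0" "lyap_quad \<alpha> N (real z) \<ge> 0"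
    using assms(1) z by (simp_all add: lyap_quad_def)
  moreover have "(real N - 1) / 2 \<le> b * lyap_const \<alpha>L \<alpha>R \<beta> N"
    unfolding b_def using assms(2,3) z by (intro lyap_const_absorbing) auto
  moreover have "b * lyap_quad \<alpha> N (real z) \<ge> 0"
    using assms \<open>lyap_quad \<alpha> N (real z) \<ge> 0\<close> by (simp add: b_def)
  ultimately have "b * (lyap \<alpha> \<alpha>L \<alpha>R \<beta> N 0 - lyap \<alpha> \<alpha>L \<alpha>R \<beta> N z)
      \<le> real N ^ 2 * \<alpha> * (lyap_quad \<alpha> N (real z - 1) - lyap_quad \<alpha> N (real z))"
    unfolding lyap_z lyap_0 right_diff_distrib distrib_left mult_zero_right by linarith
  then show ?thesis
    using False z(1) by (simp add: b_def)
qed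

lemma sum_Qgen_mult_lyap_le:
  assumes "\<alpha> > 0" "\<alpha>L > 0" "\<alpha>R > 0" "z \<in> Lam N"
  shows "(\<Sum>y\<in>Lamhat N. Qgen \<alpha> \<alpha>L \<alpha>R \<beta> N z y * lyap \<alpha> \<alpha>L \<alpha>R \<beta> N y) \<le> -1"
proof -
  have "N > 0"
    using assms(4) by (simp add: Lam_def)
  then show ?thesis
    using lyap_drift_right[OF assms, where \<beta> = \<beta>] lyap_drift_left[OF assms, where \<beta> = \<beta>]
      lyap_quad_second_difference[OF assms(1) \<open>N > 0\<close>, of "real z"]
    unfolding sum_Qgen_mult_inside_Lam[OF assms(4)] by linarith
qed

lemma lyap_quad_le:
  assumes "\<alpha> > 0"
  shows "lyap_quad \<alpha> N u \<le> 1 / (8 * \<alpha>)"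
proof (cases "N = 0")
  case False
  have "u * (real N - u) \<le> real N ^ 2 / 4"
    using zero_le_power2[of "real N - 2 * u"] by (simp add: power2_eq_square algebra_simps)
  then have "lyap_quad \<alpha> N u \<le> real N ^ 2 / 4 / (2 * (real N ^ 2 * \<alpha>))"
    unfolding lyap_quad_def using assms by (intro divide_right_mono) auto
  also have "\<dots> = 1 / (8 * \<alpha>)"
    using False assms by (simp add: field_simps)
  finally show ?thesis .
qed (use assms in \<open>simp add: lyap_quad_def\<close>)

lemma lyap_const_le:
  assumes "\<alpha>L > 0" "\<alpha>R > 0" "N \<ge> 1"
  shows "lyap_const \<alpha>L \<alpha>R \<beta> N \<le> (1 / \<alpha>L + 1 / \<alpha>R) * real N powr (\<beta> - 1)"
proof -
  have "lyap_const \<alpha>L \<alpha>R \<beta> N = (real N - 1) / 2 / real N powr (2 - \<beta>) * (1 / \<alpha>L + 1 / \<alpha>R)"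
    using assms by (simp add: lyap_const_def field_simps)
  also have "\<dots> \<le> real N / real N powr (2 - \<beta>) * (1 / \<alpha>L + 1 / \<alpha>R)"
    using assms by (intro mult_right_mono divide_right_mono) auto
  also have "real N / real N powr (2 - \<beta>) = real N powr 1 / real N powr (2 - \<beta>)"
    using assms(3) by simp
  also have "\<dots> = real N powr (1 - (2 - \<beta>))"
    by (rule powr_diff[symmetric])
  finally show ?thesis
    by (simp add: mult.commute)
qed

lemma lyap_le:
  assumes "\<alpha> > 0" "\<alpha>L > 0" "\<alpha>R > 0" "x \<in> Lam N"
  shows "lyap \<alpha> \<alpha>L \<alpha>R \<beta> N x \<le> (1 / \<alpha> + 1 / \<alpha>L + 1 / \<alpha>R) * max 1 (real N powr (\<beta> - 1))"
proof -
  have "N \<ge> 1"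
    using assms(4) by (simp add: Lam_def)
  have "lyap_quad \<alpha> N (real x) \<le> 1 / (8 * \<alpha>)"
    by (rule lyap_quad_le[OF assms(1)])
  also have "\<dots> \<le> 1 / \<alpha> * max 1 (real N powr (\<beta> - 1))"
    using assms(1) by (simp add: field_simps)
  finally have "lyap_quad \<alpha> N (real x) \<le> 1 / \<alpha> * max 1 (real N powr (\<beta> - 1))" .
  moreover have "lyap_const \<alpha>L \<alpha>R \<beta> N \<le> (1 / \<alpha>L + 1 / \<alpha>R) * max 1 (real N powr (\<beta> - 1))"
    using lyap_const_le[OF assms(2,3) \<open>N \<ge> 1\<close>, of \<beta>] assms(2,3)
    by (elim order_trans) (intro mult_left_mono; simp)
  ultimately show ?thesis
    using assms(4) by (simp add: lyap_def algebra_simps)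
qed

lemma nn_integral_surv_prob_le_lyap:
  assumes "\<alpha> > 0" "\<alpha>L > 0" "\<alpha>R > 0" "x \<in> Lam N"
  shows "(\<integral>\<^sup>+ t. ennreal (indicator {0..} t * surv_prob \<alpha> \<alpha>L \<alpha>R \<beta> N x t) \<partial>lborel)
       \<le> ennreal (lyap \<alpha> \<alpha>L \<alpha>R \<beta> N x)"
proof -
  define c where "c = 1 + (\<Sum>u\<in>Lamhat N. \<Sum>v\<in>Lamhat N. rate \<alpha> \<alpha>L \<alpha>R \<beta> N u v)"
  have "rate \<alpha> \<alpha>L \<alpha>R \<beta> N u v \<ge> 0" for u v
    using assms by (intro rate_nonneg) auto
  then have "c > 0"
    unfolding c_def by (smt (verit) sum_nonneg)
  have "2 \<le> N" "Lam N \<subseteq> Lamhat N"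
    using assms(4) by (auto simp: Lam_def Lamhat_def)
  have drift: "(\<Sum>y\<in>Lamhat N. Qgen \<alpha> \<alpha>L \<alpha>R \<beta> N z y * lyap \<alpha> \<alpha>L \<alpha>R \<beta> N y) \<le> - indicator (Lam N) z"
    if "z \<in> Lamhat N" for z
  proof (cases "z \<in> Lam N")
    case True
    then show ?thesis
      using sum_Qgen_mult_lyap_le[OF assms(1-3)] by simp
  next
    case False
    then show ?thesis
      unfolding sum_Qgen_mult[OF that] by (simp add: rate_outside_Lam[OF \<open>2 \<le> N\<close>])
  qed
  show ?thesis
    unfolding surv_prob_eq_sum_mat_exp
  proof (rule nn_integral_mat_exp_le_lyapunov)
    show "\<forall>u\<in>Lamhat N. \<forall>v\<in>Lamhat N. Qgen \<alpha> \<alpha>L \<alpha>R \<beta> N u v + (if u = v then c else 0) \<ge> 0"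
      using assms(1-3) by (intro ballI Qgen_shift_nonneg) (auto simp: c_def)
  qed (use assms \<open>c > 0\<close> \<open>Lam N \<subseteq> Lamhat N\<close> drift lyap_nonneg in \<open>auto simp: Lamhat_def\<close>)
qed

theorem lemmaB1:
  fixes \<alpha> \<alpha>L \<alpha>R :: real
  assumes "\<alpha> > 0" and "\<alpha>L > 0" and "\<alpha>R > 0"
  shows "\<exists>C>0. \<forall>(\<beta>::real) (N::nat). \<forall>x\<in>Lam N.
           (\<integral>\<^sup>+ t. ennreal (indicator {0..} t * surv_prob \<alpha> \<alpha>L \<alpha>R \<beta> N x t) \<partial>lborel)
             \<le> ennreal (C * max 1 (real N powr (\<beta> - 1)))"
proof (intro exI[of _ "1 / \<alpha> + 1 / \<alpha>L + 1 / \<alpha>R"] conjI allI ballI)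
  show "0 < 1 / \<alpha> + 1 / \<alpha>L + 1 / \<alpha>R"
    using assms by (intro add_pos_pos) auto
  fix \<beta> :: real and N :: nat and x
  assume "x \<in> Lam N"
  show "(\<integral>\<^sup>+ t. ennreal (indicator {0..} t * surv_prob \<alpha> \<alpha>L \<alpha>R \<beta> N x t) \<partial>lborel)
      \<le> ennreal ((1 / \<alpha> + 1 / \<alpha>L + 1 / \<alpha>R) * max 1 (real N powr (\<beta> - 1)))"
    by (rule order.trans[OF nn_integral_surv_prob_le_lyap[OF assms \<open>x \<in> Lam N\<close>]
          ennreal_leI[OF lyap_le[OF assms \<open>x \<in> Lam N\<close>]]])
qed

end
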